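(* Let $\varsigma=(\varsigma_1,\dots,\varsigma_K)\in\Gamma(\mathscr M_1)\oplus\dots\oplus\Gamma(\mathscr M_K)$. Then $\varsigma\in\pi(C(X))$ if and only if $\varsigma$ has the boundary decomposition property and, for every $k=1,\dots,K$ and every $x\in\overline{Y_k}$, $\varsigma_k(x)$ has a diagonal matrix representation, i.e. $\varsigma_k(x)$ maps $\mathscr V^{(i)}_x$ into itself for each $0\le i\le r_k-1$.
   Context: Let $X$ be an infinite compact metric space, $\alpha:X\to X$ a minimal homeomorphism, $\mathscr V$ a Hermitian complex line bundle over $X$, and $Y\subset X$ closed with non-empty interior. $\mathcal E=\Gamma(\mathscr V,\alpha)$ is the Hilbert $C(X)$-bimodule of continuous sections of $\mathscr V$ with right action $(\xi f)(x)=\xi(x)f(x)$, right inner product $\langle\xi(x),\eta(x)\rangle_{\mathscr V_x}$, left action $f\cdot\xi=\xi\,(f\circ\alpha)$; $\mathcal E_Y=C_0(X\setminus Y)\mathcal E$ and $\mathcal O(\mathcal E_Y)\supseteq C(X)$ is its Cuntz–Pimsner algebra. For $y\in Y$ let $r_Y(y)=\min\{n\ge1:\alpha^n(y)\in Y\}$, with distinct values $r_1<\dots<r_K$, and $Y_k=\{y\in Y:r_Y(y)=r_k\}$. Let $\mathscr V^{(0)}=X\times\mathbb C$, $\mathscr V^{(n)}=(\alpha^{n-1})^*\mathscr V\otimes\cdots\otimes\alpha^*\mathscr V\otimes\mathscr V$, so $\mathscr V^{(n)}_x=\mathscr V_{\alpha^{n-1}(x)}\otimes\cdots\otimes\mathscr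 V_x=\mathscr V^{(n-m)}_{\alpha^m(x)}\otimes\mathscr V^{(m)}_x$. Let $\mathscr D^{(n)}=\mathscr V^{(0)}\oplus\cdots\oplus\mathscr V^{(n-1)}$, $\mathscr M_k=\mathrm{End}(\mathscr D^{(r_k)})|_{\overline{Y_k}}$, $\Gamma(\mathscr M_k)$ its continuous sections. $\pi=\oplus_k\pi_k$ where $\pi_k:\mathcal O(\mathcal E_Y)\to\Gamma(\mathscr M_k)$ is the $*$-homomorphism with $\pi_k(f)(x)(a_0,\dots,a_{r_k-1})=(f(x)a_0,\dots,f(\alpha^{r_k-1}(x))a_{r_k-1})$ for $f\in C(X)$ and $\pi_k(\xi)(x)(a_0,\dots,a_{r_k-1})=(0,\xi(x)\otimes a_0,\dots,\xi(\alpha^{r_k-2}(x))\otimes a_{r_k-2})$ for $\xi\in\mathcal E_Y$, $x\in\overline{Y_k}$. Boundary decomposition property: for every $k$ and $x\in\overline{Y_k}\setminus Y_k$, with $t_1,\dots,t_m<k$ such that $r_{t_1}+\dots+r_{t_m}=r_k$ and $x\in Y_{t_1}\cap\alpha^{-r_{t_1}}(Y_{t_2})\cap\dots\cap\alpha^{-(r_{t_1}+\dots+r_{t_{m-1}})}(Y_{t_m})$, $R_0=0$, $R_s=r_{t_1}+\dots+r_{t_s}$, and the $s$-th component $\mathscr V^{(R_{s-1})}_x\oplus\dots\oplus\mathscr V^{(R_s-1)}_x$ of $\mathscr D^{(r_k)}_x$ identified with $\mathscr D^{(r_{t_s})}_{\alpha^{R_{s-1}}(x)}\otimes\mathscr V^{(R_{s-1})}_x$,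 $\varsigma_k(x)$ restricted to the $s$-th component equals $\varsigma_{t_s}(\alpha^{R_{s-1}}(x))\otimes\mathrm{id}_{\mathscr V^{(R_{s-1})}_x}$ for every $s$. *)

theory Defs
  imports "HOL-Analysis.Analysis"
begin

definition minimal_homeo :: "('a::topological_space \<Rightarrow> 'a) \<Rightarrow> bool" where
  "minimal_homeo \<alpha> \<longleftrightarrow> (\<exists>\<beta>. homeomorphism UNIV UNIV \<alpha> \<beta>) \<and>
     (\<forall>Z. closed Z \<and> \<alpha> ` Z = Z \<longrightarrow> Z = {} \<or> Z = UNIV)"

text \<open>A Hermitian complex line bundle, given by an open trivialising cover U and
 a U(1)-valued transition cocycle g: a vector v in the fibre at x has coordinates
 v_a in the chart a, and v_a = g a b x * v_b.\<close>
definition hermitian_line_bundle ::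
  "('c \<Rightarrow> 'a::topological_space set) \<Rightarrow> ('c \<Rightarrow> 'c \<Rightarrow> 'a \<Rightarrow> complex) \<Rightarrow> bool" where
  "hermitian_line_bundle U g \<longleftrightarrow>
     (\<forall>a. open (U a)) \<and> (\<Union>(range U) = UNIV) \<and>
     (\<forall>a b. continuous_on (U a \<inter> U b) (g a b)) \<and>
     (\<forall>a b x. x \<in> U a \<inter> U b \<longrightarrow> norm (g a b x) = 1) \<and>
     (\<forall>a b c x. x \<in> U a \<inter> U b \<inter> U c \<longrightarrow> g a b x * g b c x = g a c x)"

definition return_time :: "('a \<Rightarrow> 'a) \<Rightarrow> 'a set \<Rightarrow> 'a \<Rightarrow> nat" where
  "return_time \<alpha> Y y = (LEAST n. n \<ge> 1 \<and> (\<alpha> ^^ n) y \<in> Y)"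

definition nret :: "('a \<Rightarrow> 'a) \<Rightarrow> 'a set \<Rightarrow> nat" where
  "nret \<alpha> Y = card (return_time \<alpha> Y ` Y)"

definition rk :: "('a \<Rightarrow> 'a) \<Rightarrow> 'a set \<Rightarrow> nat \<Rightarrow> nat" where
  "rk \<alpha> Y k = sorted_list_of_set (return_time \<alpha> Y ` Y) ! (k - 1)"

definition Ysub :: "('a \<Rightarrow> 'a) \<Rightarrow> 'a set \<Rightarrow> nat \<Rightarrow> 'a set" where
  "Ysub \<alpha> Y k = {y \<in> Y. return_time \<alpha> Y y = rk \<alpha> Y k}"

text \<open>A tuple of charts c trivialising V^(0),...,V^(r-1) at x: the frame of
 V^(n)_x w.r.t. c is e_{c(n-1)}(\<alpha>^(n-1) x) \<otimes> ... \<otimes> e_{c 0}(x).\<close>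
definition chart_ok :: "('c \<Rightarrow> 'a set) \<Rightarrow> ('a \<Rightarrow> 'a) \<Rightarrow> nat \<Rightarrow> 'a \<Rightarrow> (nat \<Rightarrow> 'c) \<Rightarrow> bool" where
  "chart_ok U \<alpha> r x c \<longleftrightarrow> (\<forall>m<r. (\<alpha> ^^ m) x \<in> U (c m))"

text \<open>Coordinate change on V^(n)_x from chart tuple c to chart tuple c'.\<close>
definition cocyc :: "('c \<Rightarrow> 'c \<Rightarrow> 'a \<Rightarrow> complex) \<Rightarrow> ('a \<Rightarrow> 'a) \<Rightarrow> nat \<Rightarrow> (nat \<Rightarrow> 'c) \<Rightarrow> (nat \<Rightarrow> 'c) \<Rightarrow> 'a \<Rightarrow> complex" where
  "cocyc g \<alpha> n c' c x = (\<Prod>m<n. g (c' m) (c m) ((\<alpha> ^^ m) x))"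

text \<open>A continuous section over S of End(D^(r)), D^(r) = V^(0) \<oplus> ... \<oplus> V^(r-1):
 sigma x c i j is the (i,j) matrix entry (i,j < r) of the endomorphism at x w.r.t.
 the frames determined by the chart tuple c.\<close>
definition end_section ::
  "('c \<Rightarrow> 'a::topological_space set) \<Rightarrow> ('c \<Rightarrow> 'c \<Rightarrow> 'a \<Rightarrow> complex) \<Rightarrow> ('a \<Rightarrow> 'a) \<Rightarrow> nat \<Rightarrow> 'a set
     \<Rightarrow> ('a \<Rightarrow> (nat \<Rightarrow> 'c) \<Rightarrow> nat \<Rightarrow> nat \<Rightarrow> complex) \<Rightarrow> bool" where
  "end_section U g \<alpha> r S \<sigma> \<longleftrightarrow>
     (\<forall>x\<in>S. \<forall>c c'. chart_ok U \<alpha> r x c \<and> chart_ok U \<alpha> r x c' \<longrightarrow>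
        (\<forall>i<r. \<forall>j<r. \<sigma> x c' i j = cocyc g \<alpha> i c' c x * \<sigma> x c i j / cocyc g \<alpha> j c' c x)) \<and>
     (\<forall>c. \<forall>i<r. \<forall>j<r. continuous_on {x \<in> S. chart_ok U \<alpha> r x c} (\<lambda>x. \<sigma> x c i j))"

definition in_pi_CX ::
  "('c \<Rightarrow> 'a::topological_space set) \<Rightarrow> ('a \<Rightarrow> 'a) \<Rightarrow> 'a set
     \<Rightarrow> (nat \<Rightarrow> 'a \<Rightarrow> (nat \<Rightarrow> 'c) \<Rightarrow> nat \<Rightarrow> nat \<Rightarrow> complex) \<Rightarrow> bool" where
  "in_pi_CX U \<alpha> Y \<sigma> \<longleftrightarrow> (\<exists>f :: 'a \<Rightarrow> complex. continuous_on UNIV f \<and>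
     (\<forall>k\<in>{1..nret \<alpha> Y}. \<forall>x\<in>closure (Ysub \<alpha> Y k). \<forall>c. chart_ok U \<alpha> (rk \<alpha> Y k) x c \<longrightarrow>
        (\<forall>i<rk \<alpha> Y k. \<forall>j<rk \<alpha> Y k. \<sigma> k x c i j = (if i = j then f ((\<alpha> ^^ i) x) else 0))))"

definition diagonal_sections ::
  "('c \<Rightarrow> 'a::topological_space set) \<Rightarrow> ('a \<Rightarrow> 'a) \<Rightarrow> 'a set
     \<Rightarrow> (nat \<Rightarrow> 'a \<Rightarrow> (nat \<Rightarrow> 'c) \<Rightarrow> nat \<Rightarrow> nat \<Rightarrow> complex) \<Rightarrow> bool" where
  "diagonal_sections U \<alpha> Y \<sigma> \<longleftrightarrow>
     (\<forall>k\<in>{1..nret \<alpha> Y}. \<forall>x\<in>closure (Ysub \<alpha> Y k). \<forall>c. chart_ok U \<alpha> (rk \<alpha> Y k) x c \<longrightarrow>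
        (\<forall>i<rk \<alpha> Y k. \<forall>j<rk \<alpha> Y k. i \<noteq> j \<longrightarrow> \<sigma> k x c i j = 0))"

text \<open>The s-th
 block is V^(R_{s-1}) \<oplus> ... \<oplus> V^(R_s - 1); under the identification with
 D^(r_{t_s})_{\<alpha>^R_{s-1} x} \<otimes> V^(R_{s-1})_x the frames coincide, so
 "\<sigma>_k(x) restricted to block s equals \<sigma>_{t_s}(\<alpha>^R_{s-1} x) \<otimes> id" means:
 columns in block s have entries of \<sigma>_{t_s} (shifted chart tuple) in block s
 and zero outside it.\<close>
definition Rsum :: "('a \<Rightarrow> 'a) \<Rightarrow> 'a set \<Rightarrow> (nat \<Rightarrow> nat) \<Rightarrow> nat \<Rightarrow> nat" where
  "Rsum \<alpha> Y t s = (\<Sum>q=1..s. rk \<alpha> Y (t q))"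

definition boundary_decomposition ::
  "('c \<Rightarrow> 'a::topological_space set) \<Rightarrow> ('a \<Rightarrow> 'a) \<Rightarrow> 'a set
     \<Rightarrow> (nat \<Rightarrow> 'a \<Rightarrow> (nat \<Rightarrow> 'c) \<Rightarrow> nat \<Rightarrow> nat \<Rightarrow> complex) \<Rightarrow> bool" where
  "boundary_decomposition U \<alpha> Y \<sigma> \<longleftrightarrow>
     (\<forall>k\<in>{1..nret \<alpha> Y}. \<forall>x \<in> closure (Ysub \<alpha> Y k) - Ysub \<alpha> Y k. \<forall>(m::nat) (t::nat \<Rightarrow> nat).
        (\<forall>s\<in>{1..m}. 1 \<le> t s \<and> t s < k) \<and> Rsum \<alpha> Y t m = rk \<alpha> Y k \<and>
        (\<forall>s\<in>{1..m}. (\<alpha> ^^ Rsum \<alpha> Y t (s - 1)) x \<in> Ysub \<alpha> Y (t s)) \<longrightarrow>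
        (\<forall>s\<in>{1..m}. \<forall>c. chart_ok U \<alpha> (rk \<alpha> Y k) x c \<longrightarrow>
          (\<forall>j. Rsum \<alpha> Y t (s - 1) \<le> j \<and> j < Rsum \<alpha> Y t s \<longrightarrow>
            (\<forall>i<rk \<alpha> Y k. \<sigma> k x c i j =
               (if Rsum \<alpha> Y t (s - 1) \<le> i \<and> i < Rsum \<alpha> Y t s
                then \<sigma> (t s) ((\<alpha> ^^ Rsum \<alpha> Y t (s - 1)) x) (\<lambda>n. c (n + Rsum \<alpha> Y t (s - 1)))
                        (i - Rsum \<alpha> Y t (s - 1)) (j - Rsum \<alpha> Y t (s - 1))
                else 0)))))"

end

theory Submission
  imports Defs
begin

(* Minimality and compactness bound the first return time to Y, so X is the finite disjoint
   union of the Kakutani-Rokhlin towers alpha^i(Y_k), 0 <= i < r_k.  An element pi(f) is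
   diagonal with i-th entry f(alpha^i x) at x in closure(Y_k); at a boundary point x the
   successive returns of x to Y split r_k into smaller return times r_{t_1} + ... + r_{t_m},
   and comparing entries gives the boundary decomposition property.  Conversely, for a
   diagonal sigma put f(alpha^i y) = sigma_k(y)_{ii} on the towers; the diagonal entries do not
   depend on the frame.  The boundary decomposition property says that the same formula holds
   on the closures of the Y_k, so f is continuous on each of the finitely many closed sets
   alpha^i(closure Y_k), which cover X, and sigma = pi(f). *)

section \<open>Iterates of a minimal homeomorphism\<close>

lemma continuous_on_funpow:
  fixes f :: "'a::topological_space \<Rightarrow> 'a"
  assumes "continuous_on UNIV f"
  shows "continuous_on UNIV (f ^^ n)"
proof (induction n)
  case (Suc n)
  then show ?case
    using continuous_on_compose[of UNIV "f ^^ n" f] continuous_on_subset[OF assms] by simp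
qed (simp add: continuous_on_id')

lemma funpow_left_inverse:
  fixes \<alpha> \<beta> :: "'a \<Rightarrow> 'a"
  assumes "\<And>x. \<beta> (\<alpha> x) = x"
  shows "(\<beta> ^^ n) ((\<alpha> ^^ n) x) = x"
proof (induction n arbitrary: x)
  case (Suc n)
  have "(\<alpha> ^^ Suc n) x = (\<alpha> ^^ n) (\<alpha> x)" by (simp add: funpow_swap1)
  then show ?case using Suc.IH[of "\<alpha> x"] assms by simp
qed simp

lemma funpow_add_apply: "(f ^^ (m + n)) x = (f ^^ n) ((f ^^ m) x)"
  by (metis add.commute comp_apply funpow_add)

lemma funpow_left_inverse_diff:
  fixes \<alpha> \<beta> :: "'a \<Rightarrow> 'a"
  assumes "\<And>x. \<beta> (\<alpha> x) = x" and "n \<le> m"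
  shows "(\<beta> ^^ n) ((\<alpha> ^^ m) x) = (\<alpha> ^^ (m - n)) x"
  using funpow_add_apply[where f = \<alpha> and m = "m - n" and n = n] funpow_left_inverse[of \<beta> \<alpha>, OF assms(1)] assms(2)
  by simp

text \<open>With \<open>\<beta>\<close> the inverse of \<open>\<alpha>\<close>, this is the union of all \<open>\<alpha>\<^sup>n(W)\<close>, \<open>n \<in> \<int>\<close>.\<close>

definition orbit_saturation :: "('a \<Rightarrow> 'a) \<Rightarrow> ('a \<Rightarrow> 'a) \<Rightarrow> 'a set \<Rightarrow> 'a set" where
  "orbit_saturation \<alpha> \<beta> W = (\<Union>n. (\<alpha> ^^ n) -` W \<union> (\<beta> ^^ n) -` W)"

lemma orbit_saturation_commute: "orbit_saturation \<alpha> \<beta> W = orbit_saturation \<beta> \<alpha> W"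
  unfolding orbit_saturation_def by blast

lemma orbit_saturation_preimage:
  assumes "\<And>x. \<beta> (\<alpha> x) = x" and "\<alpha> z \<in> orbit_saturation \<alpha> \<beta> W"
  shows "z \<in> orbit_saturation \<alpha> \<beta> W"
proof -
  obtain n where "(\<alpha> ^^ n) (\<alpha> z) \<in> W \<or> (\<beta> ^^ n) (\<alpha> z) \<in> W"
    using assms(2) unfolding orbit_saturation_def by blast
  then show ?thesis
  proof
    assume "(\<alpha> ^^ n) (\<alpha> z) \<in> W"
    then have "(\<alpha> ^^ Suc n) z \<in> W" by (simp add: funpow_swap1)
    then show ?thesis unfolding orbit_saturation_def by blast
  next
    assume \<beta>: "(\<beta> ^^ n) (\<alpha> z) \<in> W"
    show ?thesis
    proof (cases n)
      case 0
      then have "(\<alpha> ^^ 1) z \<in> W" using \<beta> by simp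
      then show ?thesis unfolding orbit_saturation_def by blast
    next
      case (Suc p)
      then have "(\<beta> ^^ p) z \<in> W" using \<beta> by (simp add: funpow_swap1 assms(1))
      then show ?thesis unfolding orbit_saturation_def by blast
    qed
  qed
qed

lemma minimal_homeo_orbit_saturation:
  assumes "minimal_homeo \<alpha>" and hom: "homeomorphism UNIV UNIV \<alpha> \<beta>"
    and "open W" and "W \<noteq> {}"
  shows "orbit_saturation \<alpha> \<beta> W = UNIV"
proof -
  have \<beta>\<alpha>: "\<And>x. \<beta> (\<alpha> x) = x" and \<alpha>\<beta>: "\<And>x. \<alpha> (\<beta> x) = x"
    and "continuous_on UNIV \<alpha>" "continuous_on UNIV \<beta>"
    using hom unfolding homeomorphism_def by auto
  then have "open (orbit_saturation \<alpha> \<beta> W)"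
    unfolding orbit_saturation_def
    using \<open>open W\<close> by (intro open_UN ballI open_Un open_vimage continuous_on_funpow)
  then have "closed (- orbit_saturation \<alpha> \<beta> W)" by (rule closed_Compl)
  moreover have "\<alpha> ` (- orbit_saturation \<alpha> \<beta> W) = - orbit_saturation \<alpha> \<beta> W"
  proof
    show "\<alpha> ` (- orbit_saturation \<alpha> \<beta> W) \<subseteq> - orbit_saturation \<alpha> \<beta> W"
      using orbit_saturation_preimage[of \<beta> \<alpha>, OF \<beta>\<alpha>] by blast
    show "- orbit_saturation \<alpha> \<beta> W \<subseteq> \<alpha> ` (- orbit_saturation \<alpha> \<beta> W)"
    proof
      fix z assume "z \<in> - orbit_saturation \<alpha> \<beta> W"
      then have "\<beta> z \<in> - orbit_saturation \<alpha> \<beta> W"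
        using orbit_saturation_preimage[of \<alpha> \<beta>, OF \<alpha>\<beta>, of z W]
          orbit_saturation_commute[of \<beta> \<alpha>] by auto
      then show "z \<in> \<alpha> ` (- orbit_saturation \<alpha> \<beta> W)"
        using \<alpha>\<beta>[of z] by (metis image_eqI)
    qed
  qed
  ultimately have "- orbit_saturation \<alpha> \<beta> W = {} \<or> - orbit_saturation \<alpha> \<beta> W = UNIV"
    using assms(1) unfolding minimal_homeo_def by blast
  moreover have "W \<subseteq> orbit_saturation \<alpha> \<beta> W"
    using funpow_0[of \<alpha>] unfolding orbit_saturation_def by blast
  then have "- orbit_saturation \<alpha> \<beta> W \<noteq> UNIV"
    using \<open>W \<noteq> {}\<close> by blast
  ultimately show ?thesis
    by blast
qed

lemma minimal_homeo_bounded_return: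
  fixes \<alpha> :: "'a::topological_space \<Rightarrow> 'a"
  assumes "compact (UNIV :: 'a set)" and "minimal_homeo \<alpha>" and "open W" and "W \<noteq> {}"
  shows "\<exists>M. \<forall>z. \<exists>j\<in>{1..M}. (\<alpha> ^^ j) z \<in> W"
proof -
  obtain \<beta> where hom: "homeomorphism UNIV UNIV \<alpha> \<beta>"
    using assms(2) unfolding minimal_homeo_def by blast
  then have \<beta>\<alpha>: "\<And>x. \<beta> (\<alpha> x) = x" and "continuous_on UNIV \<alpha>" "continuous_on UNIV \<beta>"
    unfolding homeomorphism_def by auto
  then have "\<And>n. n \<in> UNIV \<Longrightarrow> open ((\<alpha> ^^ n) -` W \<union> (\<beta> ^^ n) -` W)"
    using \<open>open W\<close> by (intro open_Un open_vimage continuous_on_funpow)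
  moreover have "UNIV \<subseteq> (\<Union>n\<in>UNIV. (\<alpha> ^^ n) -` W \<union> (\<beta> ^^ n) -` W)"
    using minimal_homeo_orbit_saturation[OF assms(2) hom assms(3,4)]
    unfolding orbit_saturation_def by simp
  ultimately obtain J where "finite J" and J: "UNIV \<subseteq> (\<Union>n\<in>J. (\<alpha> ^^ n) -` W \<union> (\<beta> ^^ n) -` W)"
    by (rule compactE_image[OF assms(1)])
  obtain N where N: "\<forall>n\<in>J. n \<le> N"
    using \<open>finite J\<close> finite_nat_set_iff_bounded_le by blast
  have "\<exists>j\<in>{1..2 * N + 1}. (\<alpha> ^^ j) z \<in> W" for z
  proof -
    \<comment> \<open>Going forward \<open>N + 1\<close> steps first turns a backward hit into a forward one.\<close>
    have "(\<alpha> ^^ (N + 1)) z \<in> (\<Union>n\<in>J. (\<alpha> ^^ n) -` W \<union> (\<beta> ^^ n) -` W)"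
      using J by blast
    then obtain n where "n \<le> N"
      and hit: "(\<alpha> ^^ n) ((\<alpha> ^^ (N + 1)) z) \<in> W \<or> (\<beta> ^^ n) ((\<alpha> ^^ (N + 1)) z) \<in> W"
      using N by blast
    show ?thesis
    proof (cases "(\<alpha> ^^ n) ((\<alpha> ^^ (N + 1)) z) \<in> W")
      case True
      then have "(\<alpha> ^^ (N + 1 + n)) z \<in> W" by (simp only: funpow_add_apply)
      then show ?thesis using \<open>n \<le> N\<close> by (intro bexI[of _ "N + 1 + n"]) auto
    next
      case False
      moreover have "(\<beta> ^^ n) ((\<alpha> ^^ (N + 1)) z) = (\<alpha> ^^ (N + 1 - n)) z"
        using \<open>n \<le> N\<close> by (intro funpow_left_inverse_diff[of \<beta> \<alpha>, OF \<beta>\<alpha>]) simp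
      ultimately have "(\<alpha> ^^ (N + 1 - n)) z \<in> W"
        using hit by argo
      then show ?thesis using \<open>n \<le> N\<close> by (intro bexI[of _ "N + 1 - n"]) auto
    qed
  qed
  then show ?thesis by blast
qed

section \<open>Return times\<close>

lemma strict_mono_on_sorted_list_of_set_nth:
  fixes S :: "'a::linorder set"
  assumes "finite S"
  shows "strict_mono_on {1..card S} (\<lambda>k. sorted_list_of_set S ! (k - 1))"
proof (rule strict_mono_onI)
  fix k k' assume "k \<in> {1..card S}" "k' \<in> {1..card S}" "k < k'"
  then have "k - 1 < k' - 1" "k' - 1 < length (sorted_list_of_set S)"
    using assms by auto
  then show "sorted_list_of_set S ! (k - 1) < sorted_list_of_set S ! (k' - 1)"
    using sorted_wrt_nth_less[OF strict_sorted_list_of_set] by blast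
qed

lemma bij_betw_sorted_list_of_set_nth:
  fixes S :: "'a::linorder set"
  assumes "finite S"
  shows "bij_betw (\<lambda>k. sorted_list_of_set S ! (k - 1)) {1..card S} S"
proof (rule bij_betw_imageI)
  let ?L = "sorted_list_of_set S"
  have L: "set ?L = S" "length ?L = card S" using assms by auto
  show "inj_on (\<lambda>k. ?L ! (k - 1)) {1..card S}"
    using strict_mono_on_sorted_list_of_set_nth[OF assms] by (rule strict_mono_on_imp_inj_on)
  show "(\<lambda>k. ?L ! (k - 1)) ` {1..card S} = S"
  proof
    show "(\<lambda>k. ?L ! (k - 1)) ` {1..card S} \<subseteq> S"
      using L nth_mem[of _ ?L] by fastforce
    show "S \<subseteq> (\<lambda>k. ?L ! (k - 1)) ` {1..card S}"
    proof
      fix v assume "v \<in> S"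
      then obtain n where "n < card S" "v = ?L ! n"
        using L by (metis in_set_conv_nth)
      then show "v \<in> (\<lambda>k. ?L ! (k - 1)) ` {1..card S}"
        by (intro image_eqI[of _ _ "Suc n"]) auto
    qed
  qed
qed

lemma return_time_le:
  assumes "1 \<le> n" and "(\<alpha> ^^ n) z \<in> Y"
  shows "return_time \<alpha> Y z \<le> n"
  unfolding return_time_def using assms by (intro Least_le) simp

lemma Rsum_0 [simp]: "Rsum \<alpha> Y t 0 = 0"
  by (simp add: Rsum_def)

lemma Rsum_Suc [simp]: "Rsum \<alpha> Y t (Suc s) = Rsum \<alpha> Y t s + rk \<alpha> Y (t (Suc s))"
  by (simp add: Rsum_def)

lemma Rsum_split: "1 \<le> s \<Longrightarrow> Rsum \<alpha> Y t s = Rsum \<alpha> Y t (s - 1) + rk \<alpha> Y (t s)"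
  using Rsum_Suc[of \<alpha> Y t "s - 1"] by simp

lemma Rsum_mono: "s \<le> s' \<Longrightarrow> Rsum \<alpha> Y t s \<le> Rsum \<alpha> Y t s'"
  unfolding Rsum_def by (rule sum_mono2) auto

lemma exists_block_containing:
  fixes T :: "nat \<Rightarrow> nat"
  assumes "T 0 \<le> i" and "i < T m"
  shows "\<exists>s\<in>{1..m}. T (s - 1) \<le> i \<and> i < T s"
  using assms(2)
proof (induction m)
  case (Suc m)
  then show ?case
    by (cases "i < T m") (auto intro: bexI[of _ "Suc m"] simp: not_less)
qed (use assms(1) in simp)

primrec nth_return :: "('a \<Rightarrow> 'a) \<Rightarrow> 'a set \<Rightarrow> 'a \<Rightarrow> nat \<Rightarrow> nat" where
  "nth_return \<alpha> Y x 0 = 0"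
| "nth_return \<alpha> Y x (Suc s) =
     nth_return \<alpha> Y x s + return_time \<alpha> Y ((\<alpha> ^^ nth_return \<alpha> Y x s) x)"

text \<open>The index \<open>t\<^sub>s\<close> of the paper: \<open>rk \<alpha> Y (t\<^sub>s)\<close> is the time between the \<open>(s - 1)\<close>-st
  and the \<open>s\<close>-th return of \<open>x\<close> to \<open>Y\<close>.\<close>

definition return_index :: "('a \<Rightarrow> 'a) \<Rightarrow> 'a set \<Rightarrow> 'a \<Rightarrow> nat \<Rightarrow> nat" where
  "return_index \<alpha> Y x s =
     the_inv_into {1..nret \<alpha> Y} (rk \<alpha> Y) (return_time \<alpha> Y ((\<alpha> ^^ nth_return \<alpha> Y x (s - 1)) x))"

definition return_decomposition ::
  "('a \<Rightarrow> 'a) \<Rightarrow> 'a set \<Rightarrow> nat \<Rightarrow> 'a \<Rightarrow> nat \<Rightarrow> (nat \<Rightarrow> nat) \<Rightarrow> bool" where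
  "return_decomposition \<alpha> Y k x m t \<longleftrightarrow>
     (\<forall>s\<in>{1..m}. 1 \<le> t s \<and> t s < k) \<and> Rsum \<alpha> Y t m = rk \<alpha> Y k \<and>
     (\<forall>s\<in>{1..m}. (\<alpha> ^^ Rsum \<alpha> Y t (s - 1)) x \<in> Ysub \<alpha> Y (t s))"

lemma return_decomposition_block:
  assumes "return_decomposition \<alpha> Y k x m t" and s: "s \<in> {1..m}" and "k \<le> nret \<alpha> Y"
  shows "t s \<in> {1..nret \<alpha> Y}"
    and "Rsum \<alpha> Y t s = Rsum \<alpha> Y t (s - 1) + rk \<alpha> Y (t s)"
    and "Rsum \<alpha> Y t s \<le> rk \<alpha> Y k"
    and "(\<alpha> ^^ Rsum \<alpha> Y t (s - 1)) x \<in> Ysub \<alpha> Y (t s)"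
proof -
  have "1 \<le> t s \<and> t s < k" and m: "Rsum \<alpha> Y t m = rk \<alpha> Y k"
    and "(\<alpha> ^^ Rsum \<alpha> Y t (s - 1)) x \<in> Ysub \<alpha> Y (t s)"
    using assms(1) s unfolding return_decomposition_def by auto
  then show "t s \<in> {1..nret \<alpha> Y}" and "(\<alpha> ^^ Rsum \<alpha> Y t (s - 1)) x \<in> Ysub \<alpha> Y (t s)"
    using assms(3) by auto
  show "Rsum \<alpha> Y t s = Rsum \<alpha> Y t (s - 1) + rk \<alpha> Y (t s)"
    using s by (simp add: Rsum_split)
  show "Rsum \<alpha> Y t s \<le> rk \<alpha> Y k"
    using s Rsum_mono[of s m \<alpha> Y t] m by simp
qed

lemmas boundary_decomposition_iff =
  boundary_decomposition_def[folded return_decomposition_def]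

text \<open>The towers \<open>\<alpha>\<^sup>i(Y\<^sub>k)\<close>, \<open>i < r\<^sub>k\<close>, partition the space (see \<open>tower_cover\<close> and
  \<open>tower_unique\<close> below), so \<open>tower_lift \<alpha> Y h\<close> is the function with value \<open>h k y i\<close> at \<open>\<alpha>\<^sup>i y\<close>.\<close>

definition tower_lift :: "('a \<Rightarrow> 'a) \<Rightarrow> 'a set \<Rightarrow> (nat \<Rightarrow> 'a \<Rightarrow> nat \<Rightarrow> 'b) \<Rightarrow> 'a \<Rightarrow> 'b" where
  "tower_lift \<alpha> Y h z =
     (THE v. \<exists>k\<in>{1..nret \<alpha> Y}. \<exists>y\<in>Ysub \<alpha> Y k. \<exists>i<rk \<alpha> Y k. z = (\<alpha> ^^ i) y \<and> v = h k y i)"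

section \<open>Frames and diagonal entries\<close>

definition some_chart :: "('c \<Rightarrow> 'a set) \<Rightarrow> ('a \<Rightarrow> 'a) \<Rightarrow> 'a \<Rightarrow> nat \<Rightarrow> 'c" where
  "some_chart U \<alpha> x m = (SOME a. (\<alpha> ^^ m) x \<in> U a)"

lemma chart_ok_some_chart:
  assumes "hermitian_line_bundle U g"
  shows "chart_ok U \<alpha> r x (some_chart U \<alpha> x)"
proof -
  have "\<exists>a. y \<in> U a" for y
    using assms unfolding hermitian_line_bundle_def by blast
  then show ?thesis
    unfolding chart_ok_def some_chart_def by (metis someI_ex)
qed

lemma chart_ok_shift:
  assumes "chart_ok U \<alpha> r x c" and "n + R \<le> r"
  shows "chart_ok U \<alpha> n ((\<alpha> ^^ R) x) (\<lambda>m. c (m + R))"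
  unfolding chart_ok_def
proof (intro allI impI)
  fix m assume "m < n"
  then have "(\<alpha> ^^ (R + m)) x \<in> U (c (m + R))"
    using assms unfolding chart_ok_def by (simp add: add.commute)
  then show "(\<alpha> ^^ m) ((\<alpha> ^^ R) x) \<in> U (c (m + R))"
    by (simp only: funpow_add_apply)
qed

lemma end_section_diag_chart_indep:
  assumes "hermitian_line_bundle U g" and "end_section U g \<alpha> r S \<sigma>" and "x \<in> S"
    and "chart_ok U \<alpha> r x c" and "chart_ok U \<alpha> r x c'" and "i < r"
  shows "\<sigma> x c' i i = \<sigma> x c i i"
proof -
  have "g (c' m) (c m) ((\<alpha> ^^ m) x) \<noteq> 0" if "m < i" for m
  proof -
    have "(\<alpha> ^^ m) x \<in> U (c' m) \<inter> U (c m)"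
      using assms(4-6) that unfolding chart_ok_def by auto
    then have "norm (g (c' m) (c m) ((\<alpha> ^^ m) x)) = 1"
      using assms(1) unfolding hermitian_line_bundle_def by blast
    then show ?thesis by auto
  qed
  then have "cocyc g \<alpha> i c' c x \<noteq> 0"
    unfolding cocyc_def by simp
  moreover have "\<sigma> x c' i i = cocyc g \<alpha> i c' c x * \<sigma> x c i i / cocyc g \<alpha> i c' c x"
    using assms(2-6) unfolding end_section_def by blast
  ultimately show ?thesis by simp
qed

lemma continuous_on_end_section_diag:
  fixes \<alpha> :: "'a::t2_space \<Rightarrow> 'a"
  assumes line_bundle: "hermitian_line_bundle U g" and "continuous_on UNIV \<alpha>"
    and sec: "end_section U g \<alpha> r S \<sigma>" and "i < r"
  shows "continuous_on S (\<lambda>x. \<sigma> x (some_chart U \<alpha> x) i i)"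
proof (unfold continuous_on_eq_continuous_within, intro ballI)
  fix x0 assume "x0 \<in> S"
  let ?c0 = "some_chart U \<alpha> x0"
  define V where "V = {x. chart_ok U \<alpha> r x ?c0}"
  have "V = (\<Inter>m\<in>{..<r}. (\<alpha> ^^ m) -` U (?c0 m))"
    unfolding V_def chart_ok_def by auto
  moreover have "open ((\<alpha> ^^ m) -` U (?c0 m))" for m
    using line_bundle continuous_on_funpow[OF assms(2)] unfolding hermitian_line_bundle_def
    by (intro open_vimage) auto
  ultimately have "open V" by (simp add: open_INT)
  have "x0 \<in> V"
    unfolding V_def using chart_ok_some_chart[OF line_bundle] by simp
  have "continuous_on {x \<in> S. chart_ok U \<alpha> r x ?c0} (\<lambda>x. \<sigma> x ?c0 i i)"
    using sec \<open>i < r\<close> unfolding end_section_def by blast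
  moreover have "{x \<in> S. chart_ok U \<alpha> r x ?c0} = S \<inter> V"
    unfolding V_def by blast
  ultimately have "continuous_on (S \<inter> V) (\<lambda>x. \<sigma> x ?c0 i i)"
    by simp
  moreover have "\<sigma> x ?c0 i i = \<sigma> x (some_chart U \<alpha> x) i i" if "x \<in> S \<inter> V" for x
    using end_section_diag_chart_indep[OF line_bundle sec _ chart_ok_some_chart[OF line_bundle] _ \<open>i < r\<close>]
      that unfolding V_def by blast
  ultimately have "continuous_on (S \<inter> V) (\<lambda>x. \<sigma> x (some_chart U \<alpha> x) i i)"
    by (rule continuous_on_eq)
  then have "continuous (at x0 within S \<inter> V) (\<lambda>x. \<sigma> x (some_chart U \<alpha> x) i i)"
    using \<open>x0 \<in> S\<close> \<open>x0 \<in> V\<close> unfolding continuous_on_eq_continuous_within by blast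
  moreover have "at x0 within S \<inter> V = at x0 within S"
    by (rule at_within_nhd[OF \<open>x0 \<in> V\<close> \<open>open V\<close>]) blast
  ultimately show "continuous (at x0 within S) (\<lambda>x. \<sigma> x (some_chart U \<alpha> x) i i)"
    by simp
qed

lemma in_pi_CX_imp_diagonal_sections:
  "in_pi_CX U \<alpha> Y \<sigma> \<Longrightarrow> diagonal_sections U \<alpha> Y \<sigma>"
  unfolding in_pi_CX_def diagonal_sections_def by auto

lemma in_pi_CX_imp_boundary_decomposition:
  assumes "in_pi_CX U \<alpha> Y \<sigma>"
  shows "boundary_decomposition U \<alpha> Y \<sigma>"
  unfolding boundary_decomposition_iff
proof (intro ballI allI impI)
  obtain f where f: "\<And>k x c i j. k \<in> {1..nret \<alpha> Y} \<Longrightarrow> x \<in> closure (Ysub \<alpha> Y k) \<Longrightarrow>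
      chart_ok U \<alpha> (rk \<alpha> Y k) x c \<Longrightarrow> i < rk \<alpha> Y k \<Longrightarrow> j < rk \<alpha> Y k \<Longrightarrow>
      \<sigma> k x c i j = (if i = j then f ((\<alpha> ^^ i) x) else 0)"
    using assms unfolding in_pi_CX_def by blast
  fix k x m t s c j i
  assume k: "k \<in> {1..nret \<alpha> Y}" and x: "x \<in> closure (Ysub \<alpha> Y k) - Ysub \<alpha> Y k"
    and dec: "return_decomposition \<alpha> Y k x m t" and s: "s \<in> {1..m}"
    and c: "chart_ok U \<alpha> (rk \<alpha> Y k) x c"
    and j: "Rsum \<alpha> Y t (s - 1) \<le> j \<and> j < Rsum \<alpha> Y t s" and i: "i < rk \<alpha> Y k"
  define R where "R = Rsum \<alpha> Y t (s - 1)"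
  note block = return_decomposition_block[OF dec s] k
  have R: "Rsum \<alpha> Y t s = R + rk \<alpha> Y (t s)" and "R + rk \<alpha> Y (t s) \<le> rk \<alpha> Y k"
    and ts: "t s \<in> {1..nret \<alpha> Y}" and y: "(\<alpha> ^^ R) x \<in> closure (Ysub \<alpha> Y (t s))"
    using block closure_subset unfolding R_def by auto
  have jR: "R \<le> j" "j < R + rk \<alpha> Y (t s)"
    using j R unfolding R_def by auto
  have "chart_ok U \<alpha> (rk \<alpha> Y (t s)) ((\<alpha> ^^ R) x) (\<lambda>n. c (n + R))"
    using chart_ok_shift[OF c] \<open>R + rk \<alpha> Y (t s) \<le> rk \<alpha> Y k\<close> by simp
  then have f_block: "\<sigma> (t s) ((\<alpha> ^^ R) x) (\<lambda>n. c (n + R)) (i - R) (j - R) =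
      (if i - R = j - R then f ((\<alpha> ^^ (i - R)) ((\<alpha> ^^ R) x)) else 0)"
    if "R \<le> i" "i < R + rk \<alpha> Y (t s)"
    by (rule f[OF ts y]) (use that jR in auto)
  have f_x: "\<sigma> k x c i j = (if i = j then f ((\<alpha> ^^ i) x) else 0)"
    using f[OF k _ c i] x j block by simp
  show "\<sigma> k x c i j = (if R \<le> i \<and> i < Rsum \<alpha> Y t s
      then \<sigma> (t s) ((\<alpha> ^^ R) x) (\<lambda>n. c (n + R)) (i - R) (j - R) else 0)"
  proof (cases "R \<le> i \<and> i < Rsum \<alpha> Y t s")
    case True
    have "i - R = j - R \<longleftrightarrow> i = j"
      using True jR by auto
    moreover have "(\<alpha> ^^ (i - R)) ((\<alpha> ^^ R) x) = (\<alpha> ^^ i) x"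
      using True funpow_add_apply[where f = \<alpha> and m = R and n = "i - R"] by simp
    moreover have "R \<le> i" "i < R + rk \<alpha> Y (t s)"
      using True R by simp_all
    ultimately have "\<sigma> (t s) ((\<alpha> ^^ R) x) (\<lambda>n. c (n + R)) (i - R) (j - R) = \<sigma> k x c i j"
      using f_block f_x by presburger
    then show ?thesis
      using True by simp
  next
    case False
    then have "i \<noteq> j" using jR R by auto
    then show ?thesis using f_x False by auto
  qed
qed

lemma boundary_decomposition_diag:
  assumes line_bundle: "hermitian_line_bundle U g"
    and sections: "\<forall>k\<in>{1..nret \<alpha> Y}. end_section U g \<alpha> (rk \<alpha> Y k) (closure (Ysub \<alpha> Y k)) (\<sigma> k)"
    and "boundary_decomposition U \<alpha> Y \<sigma>"
    and k: "k \<in> {1..nret \<alpha> Y}" and x: "x \<in> closure (Ysub \<alpha> Y k) - Ysub \<alpha> Y k"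
    and dec: "return_decomposition \<alpha> Y k x m t" and s: "s \<in> {1..m}"
    and i: "Rsum \<alpha> Y t (s - 1) \<le> i" "i < Rsum \<alpha> Y t s"
  defines "R \<equiv> Rsum \<alpha> Y t (s - 1)"
  shows "\<sigma> k x (some_chart U \<alpha> x) i i =
    \<sigma> (t s) ((\<alpha> ^^ R) x) (some_chart U \<alpha> ((\<alpha> ^^ R) x)) (i - R) (i - R)"
proof -
  let ?c = "some_chart U \<alpha> x"
  note block = return_decomposition_block[OF dec s] k
  have ts: "t s \<in> {1..nret \<alpha> Y}" and y: "(\<alpha> ^^ R) x \<in> closure (Ysub \<alpha> Y (t s))"
    and "i - R < rk \<alpha> Y (t s)"
    using block closure_subset i unfolding R_def by auto
  have shifted: "chart_ok U \<alpha> (rk \<alpha> Y (t s)) ((\<alpha> ^^ R) x) (\<lambda>n. ?c (n + R))"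
    using block unfolding R_def
    by (intro chart_ok_shift[OF chart_ok_some_chart[OF line_bundle, of \<alpha> "rk \<alpha> Y k"]]) auto
  have "\<sigma> k x ?c i i = \<sigma> (t s) ((\<alpha> ^^ R) x) (\<lambda>n. ?c (n + R)) (i - R) (i - R)"
    using assms(3)[unfolded boundary_decomposition_iff, rule_format,
        OF k x dec s chart_ok_some_chart[OF line_bundle]] i block
    unfolding R_def by auto
  also have "\<dots> = \<sigma> (t s) ((\<alpha> ^^ R) x) (some_chart U \<alpha> ((\<alpha> ^^ R) x)) (i - R) (i - R)"
    by (rule end_section_diag_chart_indep[OF line_bundle sections[rule_format, OF ts] y
          chart_ok_some_chart[OF line_bundle] shifted \<open>i - R < rk \<alpha> Y (t s)\<close>])
  finally show ?thesis .
qed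

section \<open>Kakutani--Rokhlin towers\<close>

locale bounded_return =
  fixes \<alpha> \<beta> :: "'a::t2_space \<Rightarrow> 'a" and Y :: "'a set"
  assumes homeo: "homeomorphism UNIV UNIV \<alpha> \<beta>"
    and closed_Y: "closed Y"
    and return_bounded: "\<exists>M. \<forall>z. \<exists>j\<in>{1..M}. (\<alpha> ^^ j) z \<in> Y"
begin

lemma beta_alpha: "\<beta> (\<alpha> x) = x"
  and alpha_beta: "\<alpha> (\<beta> x) = x"
  and continuous_alpha: "continuous_on UNIV \<alpha>"
  and continuous_beta: "continuous_on UNIV \<beta>"
  using homeo unfolding homeomorphism_def by auto

lemma return_time_bound:
  "\<exists>M. \<forall>z. 0 < return_time \<alpha> Y z \<and> return_time \<alpha> Y z \<le> M \<and> (\<alpha> ^^ return_time \<alpha> Y z) z \<in> Y"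
proof -
  obtain M where M: "\<And>z. \<exists>j\<in>{1..M}. (\<alpha> ^^ j) z \<in> Y" using return_bounded by blast
  have "0 < return_time \<alpha> Y z \<and> return_time \<alpha> Y z \<le> M \<and> (\<alpha> ^^ return_time \<alpha> Y z) z \<in> Y" for z
  proof -
    obtain j where j: "1 \<le> j" "j \<le> M" "(\<alpha> ^^ j) z \<in> Y" using M[of z] by auto
    have "1 \<le> return_time \<alpha> Y z \<and> (\<alpha> ^^ return_time \<alpha> Y z) z \<in> Y"
      unfolding return_time_def
      by (rule LeastI[of "\<lambda>n. 1 \<le> n \<and> (\<alpha> ^^ n) z \<in> Y" j]) (use j in simp)
    moreover have "return_time \<alpha> Y z \<le> j" using j by (simp add: return_time_le)
    ultimately show ?thesis using j by simp
  qed
  then show ?thesis by blast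
qed

lemma return_time_pos: "0 < return_time \<alpha> Y z"
  and return_time_returns: "(\<alpha> ^^ return_time \<alpha> Y z) z \<in> Y"
  using return_time_bound by blast+

lemma finite_return_times: "finite (return_time \<alpha> Y ` Y)"
proof -
  obtain M where "\<And>z. return_time \<alpha> Y z \<le> M" using return_time_bound by blast
  then have "return_time \<alpha> Y ` Y \<subseteq> {..M}" by auto
  then show ?thesis by (rule finite_subset) simp
qed

lemma bij_betw_rk: "bij_betw (rk \<alpha> Y) {1..nret \<alpha> Y} (return_time \<alpha> Y ` Y)"
  unfolding rk_def[abs_def] nret_def
  using finite_return_times by (rule bij_betw_sorted_list_of_set_nth)

lemma strict_mono_on_rk: "strict_mono_on {1..nret \<alpha> Y} (rk \<alpha> Y)"
  unfolding rk_def[abs_def] nret_def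
  using finite_return_times by (rule strict_mono_on_sorted_list_of_set_nth)

lemma Ysub_iff: "y \<in> Ysub \<alpha> Y k \<longleftrightarrow> y \<in> Y \<and> return_time \<alpha> Y y = rk \<alpha> Y k"
  by (simp add: Ysub_def)

lemma closure_Ysub_subset: "closure (Ysub \<alpha> Y k) \<subseteq> Y"
  using closed_Y by (intro closure_minimal) (auto simp: Ysub_iff)

lemma closure_Ysub_return:
  assumes "x \<in> closure (Ysub \<alpha> Y k)"
  shows "(\<alpha> ^^ rk \<alpha> Y k) x \<in> Y"
proof -
  have "closed ((\<alpha> ^^ rk \<alpha> Y k) -` Y)"
    using closed_Y continuous_alpha by (intro closed_vimage continuous_on_funpow)
  moreover have "Ysub \<alpha> Y k \<subseteq> (\<alpha> ^^ rk \<alpha> Y k) -` Y"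
  proof
    fix y assume "y \<in> Ysub \<alpha> Y k"
    then have "return_time \<alpha> Y y = rk \<alpha> Y k" by (simp add: Ysub_iff)
    then show "y \<in> (\<alpha> ^^ rk \<alpha> Y k) -` Y" using return_time_returns[of y] by simp
  qed
  ultimately show ?thesis
    using assms closure_minimal by blast
qed

lemma nth_return_in_Y: "x \<in> Y \<Longrightarrow> (\<alpha> ^^ nth_return \<alpha> Y x s) x \<in> Y"
  by (cases s) (simp_all add: funpow_add_apply return_time_returns)

lemma strict_mono_nth_return: "strict_mono (nth_return \<alpha> Y x)"
  by (rule strict_monoI_Suc) (simp add: return_time_pos)

lemma nth_return_onto:
  assumes "(\<alpha> ^^ n) x \<in> Y"
  shows "\<exists>m. nth_return \<alpha> Y x m = n"
proof (cases "n = 0")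
  case False
  let ?T = "nth_return \<alpha> Y x"
  define m where "m = (LEAST s. n \<le> ?T s)"
  have "n \<le> ?T m"
    unfolding m_def
    by (rule LeastI[of "\<lambda>s. n \<le> ?T s"]) (rule strict_mono_imp_increasing[OF strict_mono_nth_return])
  then have "m \<noteq> 0"
    using False by (cases m) auto
  then have before: "?T (m - 1) < n"
    using not_less_Least[of "m - 1" "\<lambda>s. n \<le> ?T s", folded m_def] by simp
  then have "(\<alpha> ^^ (n - ?T (m - 1))) ((\<alpha> ^^ ?T (m - 1)) x) = (\<alpha> ^^ n) x"
    using funpow_add_apply[where f = \<alpha> and m = "?T (m - 1)" and n = "n - ?T (m - 1)"] by simp
  then have "return_time \<alpha> Y ((\<alpha> ^^ ?T (m - 1)) x) \<le> n - ?T (m - 1)"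
    using before assms by (intro return_time_le) auto
  moreover have "?T m = ?T (m - 1) + return_time \<alpha> Y ((\<alpha> ^^ ?T (m - 1)) x)"
    using \<open>m \<noteq> 0\<close> nth_return.simps(2)[of \<alpha> Y x "m - 1"] by simp
  ultimately show ?thesis
    using \<open>n \<le> ?T m\<close> before by (intro exI[of _ m]) linarith
qed (auto intro: exI[of _ "0::nat"])

lemma return_index:
  assumes "x \<in> Y"
  shows "return_index \<alpha> Y x s \<in> {1..nret \<alpha> Y}"
    and "rk \<alpha> Y (return_index \<alpha> Y x s) = return_time \<alpha> Y ((\<alpha> ^^ nth_return \<alpha> Y x (s - 1)) x)"
proof -
  let ?v = "return_time \<alpha> Y ((\<alpha> ^^ nth_return \<alpha> Y x (s - 1)) x)"
  have v: "?v \<in> return_time \<alpha> Y ` Y"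
    using nth_return_in_Y[OF assms] by blast
  then show "return_index \<alpha> Y x s \<in> {1..nret \<alpha> Y}"
    unfolding return_index_def using bij_betw_rk
    by (intro the_inv_into_into) (auto simp: bij_betw_def)
  show "rk \<alpha> Y (return_index \<alpha> Y x s) = ?v"
    unfolding return_index_def by (rule f_the_inv_into_f_bij_betw[OF bij_betw_rk]) (rule v)
qed

lemma Rsum_return_index: "x \<in> Y \<Longrightarrow> Rsum \<alpha> Y (return_index \<alpha> Y x) s = nth_return \<alpha> Y x s"
  by (induction s) (simp_all add: return_index(2))

lemma boundary_point_return_decomposition:
  assumes k: "k \<in> {1..nret \<alpha> Y}" and x: "x \<in> closure (Ysub \<alpha> Y k) - Ysub \<alpha> Y k"
  shows "\<exists>m. return_decomposition \<alpha> Y k x m (return_index \<alpha> Y x)"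
proof -
  let ?T = "nth_return \<alpha> Y x" and ?t = "return_index \<alpha> Y x"
  have "x \<in> Y" using x closure_Ysub_subset by blast
  note Rsum = Rsum_return_index[OF \<open>x \<in> Y\<close>]
  obtain m where m: "?T m = rk \<alpha> Y k"
    using nth_return_onto closure_Ysub_return x by blast
  have "?t s < k" if s: "s \<in> {1..m}" for s
  proof -
    have "?T s \<le> ?T m"
      using s by (simp add: strict_mono_less_eq[OF strict_mono_nth_return])
    moreover have "?T s = ?T (s - 1) + rk \<alpha> Y (?t s)"
      using Rsum_split[of s \<alpha> Y ?t] s by (simp add: Rsum)
    moreover have "rk \<alpha> Y (?t s) \<noteq> rk \<alpha> Y k"
      \<comment> \<open>a single block of length \<open>r\<^sub>k\<close> would put \<open>x\<close> into \<open>Y\<^sub>k\<close>\<close>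
    proof
      assume eq: "rk \<alpha> Y (?t s) = rk \<alpha> Y k"
      then have "?T (s - 1) = ?T 0" using calculation m by simp
      then have "s = 1"
        using s strict_mono_eq[OF strict_mono_nth_return, where x = "s - 1" and y = 0] by simp
      then have "return_time \<alpha> Y x = rk \<alpha> Y k"
        using eq return_index(2)[OF \<open>x \<in> Y\<close>, of 1] by simp
      then show False using x \<open>x \<in> Y\<close> by (simp add: Ysub_iff)
    qed
    ultimately have "rk \<alpha> Y (?t s) < rk \<alpha> Y k" using m by linarith
    then show ?thesis
      using strict_mono_on_less[OF strict_mono_on_rk return_index(1)[OF \<open>x \<in> Y\<close>] k] by blast
  qed
  moreover have "1 \<le> ?t s" for s
    using return_index(1)[OF \<open>x \<in> Y\<close>] by simp
  moreover have "(\<alpha> ^^ Rsum \<alpha> Y ?t (s - 1)) x \<in> Ysub \<alpha> Y (?t s)" for s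
    unfolding Rsum Ysub_iff using nth_return_in_Y[OF \<open>x \<in> Y\<close>] return_index(2)[OF \<open>x \<in> Y\<close>] by simp
  ultimately have "return_decomposition \<alpha> Y k x m ?t"
    unfolding return_decomposition_def Rsum m by blast
  then show ?thesis ..
qed

lemma tower_cover: "\<exists>k\<in>{1..nret \<alpha> Y}. \<exists>y\<in>Ysub \<alpha> Y k. \<exists>i<rk \<alpha> Y k. z = (\<alpha> ^^ i) y"
proof -
  obtain M where "\<And>z. \<exists>j\<in>{1..M}. (\<alpha> ^^ j) z \<in> Y" using return_bounded by blast
  then obtain j where "j \<le> M" "(\<alpha> ^^ j) ((\<beta> ^^ M) z) \<in> Y" by fastforce
  then have "(\<beta> ^^ (M - j)) z \<in> Y"
    by (simp add: funpow_left_inverse_diff[of \<alpha> \<beta>, OF alpha_beta])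
  then have ex: "\<exists>j. (\<beta> ^^ j) z \<in> Y" by blast
  define i where "i = (LEAST j. (\<beta> ^^ j) z \<in> Y)"
  define y where "y = (\<beta> ^^ i) z"
  have "y \<in> Y" unfolding y_def i_def using LeastI_ex[OF ex] .
  then obtain k where k: "k \<in> {1..nret \<alpha> Y}" "rk \<alpha> Y k = return_time \<alpha> Y y"
    using bij_betw_rk unfolding bij_betw_def by (metis imageE image_eqI)
  then have "y \<in> Ysub \<alpha> Y k" using \<open>y \<in> Y\<close> by (simp add: Ysub_iff)
  have "i < rk \<alpha> Y k"
  proof (rule ccontr)
    assume "\<not> i < rk \<alpha> Y k"
    then have "return_time \<alpha> Y y \<le> i" using k(2) by simp
    then have "(\<alpha> ^^ return_time \<alpha> Y y) y = (\<beta> ^^ (i - return_time \<alpha> Y y)) z"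
      unfolding y_def by (rule funpow_left_inverse_diff[of \<alpha> \<beta>, OF alpha_beta])
    then have "(\<beta> ^^ (i - return_time \<alpha> Y y)) z \<in> Y" using return_time_returns by metis
    then have "i \<le> i - return_time \<alpha> Y y" unfolding i_def by (rule Least_le)
    then show False using return_time_pos[of y] \<open>\<not> i < rk \<alpha> Y k\<close> k(2) by linarith
  qed
  moreover have "z = (\<alpha> ^^ i) y"
    unfolding y_def using funpow_left_inverse[of \<alpha> \<beta>, OF alpha_beta] by simp
  ultimately show ?thesis using k \<open>y \<in> Ysub \<alpha> Y k\<close> by blast
qed

lemma tower_level_unique:
  assumes "y \<in> Ysub \<alpha> Y k" "y' \<in> Ysub \<alpha> Y k'" "i \<le> i'" "i' < rk \<alpha> Y k'"
    and "(\<alpha> ^^ i) y = (\<alpha> ^^ i') y'"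
  shows "i = i' \<and> y = y'"
proof -
  have "y = (\<beta> ^^ i) ((\<alpha> ^^ i) y)"
    by (rule funpow_left_inverse[of \<beta> \<alpha>, OF beta_alpha, symmetric])
  also have "\<dots> = (\<alpha> ^^ (i' - i)) y'"
    unfolding assms(5) by (rule funpow_left_inverse_diff[of \<beta> \<alpha>, OF beta_alpha assms(3)])
  finally have y: "y = (\<alpha> ^^ (i' - i)) y'" .
  have "i' - i = 0"
  proof (rule ccontr)
    assume "i' - i \<noteq> 0"
    moreover have "(\<alpha> ^^ (i' - i)) y' \<in> Y"
      using y assms(1) by (simp add: Ysub_iff)
    ultimately have "return_time \<alpha> Y y' \<le> i' - i"
      by (intro return_time_le) auto
    then show False using assms(2,4) by (simp add: Ysub_iff)
  qed
  then show ?thesis using y assms(3) by simp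
qed

lemma tower_unique:
  assumes "k \<in> {1..nret \<alpha> Y}" "k' \<in> {1..nret \<alpha> Y}" "y \<in> Ysub \<alpha> Y k" "y' \<in> Ysub \<alpha> Y k'"
    and "i < rk \<alpha> Y k" "i' < rk \<alpha> Y k'" "(\<alpha> ^^ i) y = (\<alpha> ^^ i') y'"
  shows "k = k' \<and> y = y' \<and> i = i'"
proof -
  have "i = i' \<and> y = y'"
  proof (cases "i \<le> i'")
    case True
    show ?thesis using tower_level_unique[OF assms(3,4) True assms(6,7)] .
  next
    case False
    then show ?thesis using tower_level_unique[OF assms(4,3) _ assms(5) assms(7)[symmetric]] by simp
  qed
  moreover from this have "rk \<alpha> Y k = rk \<alpha> Y k'"
    using assms(3,4) by (simp add: Ysub_iff)
  then have "k = k'"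
    by (rule inj_onD[OF bij_betw_imp_inj_on[OF bij_betw_rk] _ assms(1,2)])
  ultimately show ?thesis by simp
qed

lemma tower_lift_eq:
  assumes "k \<in> {1..nret \<alpha> Y}" "y \<in> Ysub \<alpha> Y k" "i < rk \<alpha> Y k"
  shows "tower_lift \<alpha> Y h ((\<alpha> ^^ i) y) = h k y i"
  unfolding tower_lift_def
proof (rule the_equality)
  show "\<exists>k'\<in>{1..nret \<alpha> Y}. \<exists>y'\<in>Ysub \<alpha> Y k'. \<exists>i'<rk \<alpha> Y k'.
          (\<alpha> ^^ i) y = (\<alpha> ^^ i') y' \<and> h k y i = h k' y' i'"
    using assms by blast
  fix v
  assume "\<exists>k'\<in>{1..nret \<alpha> Y}. \<exists>y'\<in>Ysub \<alpha> Y k'. \<exists>i'<rk \<alpha> Y k'.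
            (\<alpha> ^^ i) y = (\<alpha> ^^ i') y' \<and> v = h k' y' i'"
  then obtain k' y' i' where "k' \<in> {1..nret \<alpha> Y}" "y' \<in> Ysub \<alpha> Y k'" "i' < rk \<alpha> Y k'"
    and "(\<alpha> ^^ i) y = (\<alpha> ^^ i') y'" "v = h k' y' i'"
    by blast
  then show "v = h k y i"
    using tower_unique[OF assms(1) _ assms(2) _ assms(3)] by metis
qed

lemma tower_lift_closure:
  assumes compatible: "\<And>k x m t s i. k \<in> {1..nret \<alpha> Y} \<Longrightarrow> x \<in> closure (Ysub \<alpha> Y k) - Ysub \<alpha> Y k \<Longrightarrow>
      return_decomposition \<alpha> Y k x m t \<Longrightarrow> s \<in> {1..m} \<Longrightarrow>
      Rsum \<alpha> Y t (s - 1) \<le> i \<Longrightarrow> i < Rsum \<alpha> Y t s \<Longrightarrow>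
      h k x i = h (t s) ((\<alpha> ^^ Rsum \<alpha> Y t (s - 1)) x) (i - Rsum \<alpha> Y t (s - 1))"
    and k: "k \<in> {1..nret \<alpha> Y}" and x: "x \<in> closure (Ysub \<alpha> Y k)" and i: "i < rk \<alpha> Y k"
  shows "h k x i = tower_lift \<alpha> Y h ((\<alpha> ^^ i) x)"
proof (cases "x \<in> Ysub \<alpha> Y k")
  case True
  show ?thesis by (rule tower_lift_eq[OF k True i, symmetric])
next
  case False
  let ?t = "return_index \<alpha> Y x"
  obtain m where dec: "return_decomposition \<alpha> Y k x m ?t"
    using boundary_point_return_decomposition[OF k] x False by blast
  then obtain s where s: "s \<in> {1..m}" "Rsum \<alpha> Y ?t (s - 1) \<le> i" "i < Rsum \<alpha> Y ?t s"
    using exists_block_containing[of "Rsum \<alpha> Y ?t" i m] i unfolding return_decomposition_def by auto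
  define R where "R = Rsum \<alpha> Y ?t (s - 1)"
  note block = return_decomposition_block[OF dec s(1)] k
  have ts: "?t s \<in> {1..nret \<alpha> Y}" and y: "(\<alpha> ^^ R) x \<in> Ysub \<alpha> Y (?t s)"
    using block unfolding R_def by auto
  have "i - R < rk \<alpha> Y (?t s)"
    using s block unfolding R_def by auto
  have "h k x i = h (?t s) ((\<alpha> ^^ R) x) (i - R)"
    unfolding R_def using compatible[OF k _ dec s] x False by blast
  also have "\<dots> = tower_lift \<alpha> Y h ((\<alpha> ^^ (i - R)) ((\<alpha> ^^ R) x))"
    by (rule tower_lift_eq[OF ts y \<open>i - R < rk \<alpha> Y (?t s)\<close>, symmetric])
  also have "\<dots> = tower_lift \<alpha> Y h ((\<alpha> ^^ i) x)"
    using s(2) funpow_add_apply[where f = \<alpha> and m = R and n = "i - R"] unfolding R_def by simp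
  finally show ?thesis .
qed

lemma continuous_tower_lift:
  assumes continuous: "\<And>k i. k \<in> {1..nret \<alpha> Y} \<Longrightarrow> i < rk \<alpha> Y k \<Longrightarrow>
      continuous_on (closure (Ysub \<alpha> Y k)) (\<lambda>x. h k x i)"
    and lift: "\<And>k x i. k \<in> {1..nret \<alpha> Y} \<Longrightarrow> x \<in> closure (Ysub \<alpha> Y k) \<Longrightarrow> i < rk \<alpha> Y k \<Longrightarrow>
      h k x i = tower_lift \<alpha> Y h ((\<alpha> ^^ i) x)"
  shows "continuous_on UNIV (tower_lift \<alpha> Y h)"
proof -
  define I where "I = Sigma {1..nret \<alpha> Y} (\<lambda>k. {..<rk \<alpha> Y k})"
  define P where "P ki = (\<beta> ^^ snd ki) -` closure (Ysub \<alpha> Y (fst ki))" for ki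
  have "continuous_on (P ki) (tower_lift \<alpha> Y h)" if "ki \<in> I" for ki
  proof -
    obtain k i where ki: "ki = (k, i)" "k \<in> {1..nret \<alpha> Y}" "i < rk \<alpha> Y k"
      using \<open>ki \<in> I\<close> unfolding I_def by blast
    have "continuous_on (P ki) (\<lambda>z. h k ((\<beta> ^^ i) z) i)"
      using continuous_on_subset[OF continuous_on_funpow[OF continuous_beta], of "P ki" i]
      by (intro continuous_on_compose2[OF continuous[OF ki(2,3)]]) (auto simp: P_def ki(1))
    moreover have "h k ((\<beta> ^^ i) z) i = tower_lift \<alpha> Y h z" if "z \<in> P ki" for z
      using lift[OF ki(2) _ ki(3), of "(\<beta> ^^ i) z"] that
      by (simp add: P_def ki(1) funpow_left_inverse[of \<alpha> \<beta>, OF alpha_beta])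
    ultimately show ?thesis by (rule continuous_on_eq)
  qed
  moreover have "finite I" unfolding I_def by simp
  moreover have "closed (P ki)" for ki
    unfolding P_def by (intro closed_vimage closed_closure continuous_on_funpow continuous_beta)
  ultimately have "continuous_on (\<Union>ki\<in>I. P ki) (tower_lift \<alpha> Y h)"
    by (intro continuous_on_closed_Union)
  moreover have "z \<in> (\<Union>ki\<in>I. P ki)" for z
  proof -
    obtain k y i where "k \<in> {1..nret \<alpha> Y}" "y \<in> Ysub \<alpha> Y k" "i < rk \<alpha> Y k" "z = (\<alpha> ^^ i) y"
      using tower_cover by blast
    then have "(k, i) \<in> I" "z \<in> P (k, i)"
      unfolding I_def P_def using closure_subset funpow_left_inverse[of \<beta> \<alpha>, OF beta_alpha] by auto
    then show ?thesis by blast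
  qed
  ultimately show ?thesis
    by (metis UNIV_eq_I)
qed

lemma in_pi_CX_if_boundary_decomposition_diagonal:
  assumes line_bundle: "hermitian_line_bundle U g"
    and sections: "\<forall>k\<in>{1..nret \<alpha> Y}. end_section U g \<alpha> (rk \<alpha> Y k) (closure (Ysub \<alpha> Y k)) (\<sigma> k)"
    and boundary: "boundary_decomposition U \<alpha> Y \<sigma>" and diagonal: "diagonal_sections U \<alpha> Y \<sigma>"
  shows "in_pi_CX U \<alpha> Y \<sigma>"
proof -
  define h where "h k x i = \<sigma> k x (some_chart U \<alpha> x) i i" for k x i
  have diag: "\<sigma> k x c i i = h k x i"
    if "k \<in> {1..nret \<alpha> Y}" "x \<in> closure (Ysub \<alpha> Y k)" "chart_ok U \<alpha> (rk \<alpha> Y k) x c" "i < rk \<alpha> Y k"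
    for k x c i
    unfolding h_def
    by (rule end_section_diag_chart_indep[OF line_bundle sections[rule_format, OF that(1)] that(2)
          chart_ok_some_chart[OF line_bundle] that(3,4)])
  have compatible: "h k x i = h (t s) ((\<alpha> ^^ Rsum \<alpha> Y t (s - 1)) x) (i - Rsum \<alpha> Y t (s - 1))"
    if "k \<in> {1..nret \<alpha> Y}" "x \<in> closure (Ysub \<alpha> Y k) - Ysub \<alpha> Y k"
      "return_decomposition \<alpha> Y k x m t" "s \<in> {1..m}"
      "Rsum \<alpha> Y t (s - 1) \<le> i" "i < Rsum \<alpha> Y t s"
    for k x m t s i
    unfolding h_def by (rule boundary_decomposition_diag[OF line_bundle sections boundary that])
  have lift: "h k x i = tower_lift \<alpha> Y h ((\<alpha> ^^ i) x)"
    if "k \<in> {1..nret \<alpha> Y}" "x \<in> closure (Ysub \<alpha> Y k)" "i < rk \<alpha> Y k" for k x i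
    by (rule tower_lift_closure[OF compatible that])
  have "continuous_on (closure (Ysub \<alpha> Y k)) (\<lambda>x. h k x i)"
    if "k \<in> {1..nret \<alpha> Y}" "i < rk \<alpha> Y k" for k i
    unfolding h_def using sections that
    by (intro continuous_on_end_section_diag[OF line_bundle continuous_alpha]) auto
  then have continuous: "continuous_on UNIV (tower_lift \<alpha> Y h)"
    using lift by (rule continuous_tower_lift)
  have entries: "\<sigma> k x c i j = (if i = j then tower_lift \<alpha> Y h ((\<alpha> ^^ i) x) else 0)"
    if "k \<in> {1..nret \<alpha> Y}" "x \<in> closure (Ysub \<alpha> Y k)" "chart_ok U \<alpha> (rk \<alpha> Y k) x c"
      "i < rk \<alpha> Y k" "j < rk \<alpha> Y k"
    for k x c i j
  proof (cases "i = j")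
    case True
    then show ?thesis using diag[OF that(1-4)] lift[OF that(1,2,4)] by simp
  next
    case False
    then show ?thesis using diagonal that unfolding diagonal_sections_def by simp
  qed
  show ?thesis
    unfolding in_pi_CX_def
    by (intro exI[of _ "tower_lift \<alpha> Y h"] conjI continuous ballI allI impI entries)
qed

end

theorem corollary8p4:
  fixes \<alpha> :: "'a::metric_space \<Rightarrow> 'a" and Y :: "'a set"
    and U :: "'c \<Rightarrow> 'a set" and g :: "'c \<Rightarrow> 'c \<Rightarrow> 'a \<Rightarrow> complex"
    and \<sigma> :: "nat \<Rightarrow> 'a \<Rightarrow> (nat \<Rightarrow> 'c) \<Rightarrow> nat \<Rightarrow> nat \<Rightarrow> complex"
  assumes "compact (UNIV :: 'a set)" and "infinite (UNIV :: 'a set)"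
    and "minimal_homeo \<alpha>"
    and "hermitian_line_bundle U g"
    and "closed Y" and "interior Y \<noteq> {}"
    and "\<forall>k\<in>{1..nret \<alpha> Y}. end_section U g \<alpha> (rk \<alpha> Y k) (closure (Ysub \<alpha> Y k)) (\<sigma> k)"
  shows "in_pi_CX U \<alpha> Y \<sigma> \<longleftrightarrow>
           boundary_decomposition U \<alpha> Y \<sigma> \<and> diagonal_sections U \<alpha> Y \<sigma>"
proof -
  obtain \<beta> where "homeomorphism UNIV UNIV \<alpha> \<beta>"
    using assms(3) unfolding minimal_homeo_def by blast
  moreover have "\<exists>M. \<forall>z. \<exists>j\<in>{1..M}. (\<alpha> ^^ j) z \<in> Y"
    using minimal_homeo_bounded_return[OF assms(1,3) open_interior assms(6)] interior_subset by blast
  ultimately interpret bounded_return \<alpha> \<beta> Y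
    using assms(5) by unfold_locales
  show ?thesis
  proof
    assume "in_pi_CX U \<alpha> Y \<sigma>"
    then show "boundary_decomposition U \<alpha> Y \<sigma> \<and> diagonal_sections U \<alpha> Y \<sigma>"
      by (simp add: in_pi_CX_imp_boundary_decomposition in_pi_CX_imp_diagonal_sections)
  next
    assume "boundary_decomposition U \<alpha> Y \<sigma> \<and> diagonal_sections U \<alpha> Y \<sigma>"
    then show "in_pi_CX U \<alpha> Y \<sigma>"
      using in_pi_CX_if_boundary_decomposition_diagonal[OF assms(4,7)] by blast
  qed
qed

end
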